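(* A uniformly random string over an alphabet of size $O(\varepsilon^{-3})$ satisfies the $\varepsilon$-self-matching property with constant probability.
   Context: A monotone matching between a string $S$ and itself is a set of pairs $(a_1,b_1),\dots,(a_m,b_m)$ with $a_1<\dots<a_m$, $b_1<\dots<b_m$ and $S[a_i]=S[b_i]$; a pair is bad if $a_i\ne b_i$. $S$ satisfies the $\varepsilon$-self-matching property if every monotone matching between $S$ and itself contains fewer than $\varepsilon|S|$ bad pairs. "Constant probability" means a probability bounded below by a positive constant independent of the string length. *)

theory Defs
  imports Main Complex_Main
begin

definition monotone_self_matching :: "'a list \<Rightarrow> (nat \<times> nat) list \<Rightarrow> bool" where
  "monotone_self_matching S M \<longleftrightarrow>
     sorted_wrt (<) (map fst M) \<and> sorted_wrt (<) (map snd M) \<and>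
     (\<forall>(a, b) \<in> set M. a < length S \<and> b < length S \<and> S ! a = S ! b)"

definition bad_pairs :: "(nat \<times> nat) list \<Rightarrow> nat" where
  "bad_pairs M = length (filter (\<lambda>(a, b). a \<noteq> b) M)"

definition self_matching_property :: "real \<Rightarrow> 'a list \<Rightarrow> bool" where
  "self_matching_property \<epsilon> S \<longleftrightarrow>
     (\<forall>M. monotone_self_matching S M \<longrightarrow> real (bad_pairs M) < \<epsilon> * real (length S))"

definition strings_over :: "nat \<Rightarrow> nat \<Rightarrow> nat list set" where
  "strings_over k n = {S. length S = n \<and> set S \<subseteq> {..<k}}"

end

theory Submission imports Defs begin

text \<open>If S is not \<epsilon>-self-matching, some monotone self-matching has at least \<epsilon>n bad pairs; half
  of them point the same way, so (mirroring if necessary) S satisfies S[a_i] = S[b_i] for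
  t \<approx> \<epsilon>n/2 pairs a_i < b_i with both endpoint sequences increasing. Such a pattern is
  determined by two t-subsets of the positions, and it fixes the letters at the t distinct
  positions b_i in terms of earlier letters, so it holds for at most k^(n-t) strings. By the
  union bound at most (n choose t)^2 k^(n-t) strings are bad, and (n choose t) \<le> (en/t)^t makes
  this at most k^n/2 as soon as k \<ge> 72/\<epsilon>^2.\<close>

lemma strings_over_eq_lists: "strings_over k n = {xs. set xs \<subseteq> {..<k} \<and> length xs = n}"
  unfolding strings_over_def by auto

lemma finite_strings_over: "finite (strings_over k n)"
  by (simp add: strings_over_eq_lists finite_lists_length_eq)

lemma card_strings_over: "card (strings_over k n) = k ^ n"
  by (simp add: strings_over_eq_lists card_lists_length_eq)

text \<open>Each right endpoint b of a constraint is determined by the earlier position a,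
  so a string satisfying the constraints is determined by its letters outside snd ` R.\<close>
lemma card_strings_with_equal_pairs_le:
  assumes R: "\<forall>(a, b) \<in> R. a < b \<and> b < n" and inj: "inj_on snd R"
  shows "card {S \<in> strings_over k n. \<forall>(a, b) \<in> R. S ! a = S ! b} \<le> k ^ (n - card R)"
proof -
  define G where "G = {S \<in> strings_over k n. \<forall>(a, b) \<in> R. S ! a = S ! b}"
  define B where "B = snd ` R"
  define free where "free = filter (\<lambda>i. i \<notin> B) [0..<n]"
  define restrict where "restrict S = map ((!) S) free" for S :: "nat list"
  have "B \<subseteq> {..<n}" using R by (auto simp: B_def)
  moreover have "card B = card R" using inj by (simp add: B_def card_image)
  moreover have "set free = {..<n} - B" by (auto simp: free_def)
  ultimately have length_free: "length free = n - card R"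
    by (simp add: free_def distinct_card[symmetric] card_Diff_subset finite_subset)
  have "inj_on restrict G"
  proof (rule inj_onI)
    fix S1 S2 assume S1: "S1 \<in> G" and S2: "S2 \<in> G" and eq: "restrict S1 = restrict S2"
    have "S1 ! i = S2 ! i" if "i < n" for i
      using that
    proof (induction i rule: less_induct)
      case (less i)
      show ?case
      proof (cases "i \<in> B")
        case True
        then obtain a where "(a, i) \<in> R" by (auto simp: B_def)
        then have "a < i" "S1 ! a = S1 ! i" "S2 ! a = S2 ! i"
          using R S1 S2 by (auto simp: G_def)
        with less show ?thesis by force
      next
        case False
        then have "i \<in> set free" using less.prems by (simp add: free_def)
        then show ?thesis using eq by (simp add: restrict_def)
      qed
    qed
    moreover have "length S1 = n" "length S2 = n"
      using S1 S2 by (auto simp: G_def strings_over_def)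
    ultimately show "S1 = S2" by (simp add: nth_equalityI)
  qed
  moreover have "restrict ` G \<subseteq> strings_over k (n - card R)"
  proof
    fix T assume "T \<in> restrict ` G"
    then obtain S where S: "S \<in> G" "T = restrict S" by blast
    have "\<forall>i \<in> set free. S ! i \<in> set S"
      using S(1) by (auto simp: free_def G_def strings_over_def)
    then show "T \<in> strings_over k (n - card R)"
      using S by (auto simp: restrict_def strings_over_def length_free G_def)
  qed
  ultimately have "card G \<le> card (strings_over k (n - card R))"
    using card_inj_on_le finite_strings_over by blast
  then show ?thesis by (simp add: G_def card_strings_over)
qed

definition forward_matchings :: "nat \<Rightarrow> nat \<Rightarrow> (nat \<times> nat) list set" where
  "forward_matchings n t =
     {P. length P = t \<and> sorted_wrt (<) (map fst P) \<and> sorted_wrt (<) (map snd P) \<and>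
         (\<forall>(a, b) \<in> set P. a < b \<and> b < n)}"

text \<open>A forward matching is determined by its two sets of endpoints, each a t-subset of {..<n}.\<close>
lemma finite_forward_matchings: "finite (forward_matchings n t)"
  and card_forward_matchings_le: "card (forward_matchings n t) \<le> (n choose t)\<^sup>2"
proof -
  define X where "X = {A. A \<subseteq> {..<n} \<and> card A = t}"
  define endpoints where "endpoints P = (set (map fst P), set (map snd P))"
    for P :: "(nat \<times> nat) list"
  have inj: "inj_on endpoints (forward_matchings n t)"
  proof (rule inj_onI)
    fix P1 P2
    assume P: "P1 \<in> forward_matchings n t" "P2 \<in> forward_matchings n t"
      "endpoints P1 = endpoints P2"
    have "map fst P1 = map fst P2" "map snd P1 = map snd P2"
      by (rule sorted_distinct_set_unique;
          use P in \<open>auto simp: forward_matchings_def endpoints_def strict_sorted_iff\<close>)+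
    then show "P1 = P2" by (metis zip_map_fst_snd)
  qed
  have img: "endpoints ` forward_matchings n t \<subseteq> X \<times> X"
  proof (rule image_subsetI)
    fix P assume P: "P \<in> forward_matchings n t"
    then have "distinct (map fst P)" "distinct (map snd P)"
      by (auto simp: forward_matchings_def strict_sorted_iff)
    moreover have "set (map fst P) \<subseteq> {..<n}" "set (map snd P) \<subseteq> {..<n}"
      using P by (fastforce simp: forward_matchings_def)+
    ultimately show "endpoints P \<in> X \<times> X"
      using P by (auto simp: endpoints_def X_def forward_matchings_def distinct_card
                       simp del: set_map)
  qed
  have finX: "finite (X \<times> X)" by (simp add: X_def)
  show "finite (forward_matchings n t)"
    using finite_imageD[OF finite_subset[OF img finX] inj] .
  have "card (forward_matchings n t) \<le> card (X \<times> X)"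
    by (rule card_inj_on_le[OF inj img finX])
  also have "\<dots> = (n choose t)\<^sup>2"
    by (simp add: card_cartesian_product X_def n_subsets power2_eq_square)
  finally show "card (forward_matchings n t) \<le> (n choose t)\<^sup>2" .
qed

lemma card_strings_with_forward_matching_le:
  assumes "P \<in> forward_matchings n t"
  shows "card {S \<in> strings_over k n. \<forall>(a, b) \<in> set P. S ! a = S ! b} \<le> k ^ (n - t)"
proof -
  have "distinct P" "inj_on snd (set P)"
    using assms by (auto simp: forward_matchings_def strict_sorted_iff distinct_map)
  then have "card (set P) = t" using assms by (simp add: distinct_card forward_matchings_def)
  then show ?thesis
    using card_strings_with_equal_pairs_le[of "set P" n] \<open>inj_on snd (set P)\<close> assms
    by (auto simp: forward_matchings_def)
qed

lemma monotone_self_matching_swap: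
  "monotone_self_matching S (map prod.swap M) \<longleftrightarrow> monotone_self_matching S M"
  by (auto simp: monotone_self_matching_def comp_def)

lemma bad_pairs_eq_forward_plus_backward:
  "bad_pairs M = length (filter (\<lambda>(a, b). a < b) M)
                 + length (filter (\<lambda>(a, b). a < b) (map prod.swap M))"
  by (induction M) (auto simp: bad_pairs_def)

lemma forward_matching_from_monotone_self_matching:
  assumes M: "monotone_self_matching S M" and t: "t \<le> length (filter (\<lambda>(a, b). a < b) M)"
  shows "\<exists>P \<in> forward_matchings (length S) t. \<forall>(a, b) \<in> set P. S ! a = S ! b"
proof -
  define P where "P = take t (filter (\<lambda>(a, b). a < b) M)"
  have "set P \<subseteq> set M" by (auto simp: P_def dest: in_set_takeD)
  moreover have "\<forall>(a, b) \<in> set P. a < b" by (auto simp: P_def dest!: in_set_takeD)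
  moreover have "sorted_wrt (<) (map fst P)" "sorted_wrt (<) (map snd P)"
    using M by (auto simp: P_def monotone_self_matching_def take_map[symmetric]
                     sorted_wrt_map sorted_wrt_filter intro!: sorted_wrt_take)
  moreover have "length P = t" using t by (simp add: P_def)
  ultimately have "P \<in> forward_matchings (length S) t"
    using M by (fastforce simp: forward_matchings_def monotone_self_matching_def)
  moreover have "\<forall>(a, b) \<in> set P. S ! a = S ! b"
    using \<open>set P \<subseteq> set M\<close> M by (auto simp: monotone_self_matching_def)
  ultimately show ?thesis by blast
qed

text \<open>Among at least 2t - 1 bad pairs, t point forward either in M or in its mirror image.\<close>
lemma forward_matching_from_bad_pairs:
  assumes M: "monotone_self_matching S M" and t: "2 * t \<le> bad_pairs M + 1"
  shows "\<exists>P \<in> forward_matchings (length S) t. \<forall>(a, b) \<in> set P. S ! a = S ! b"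
proof -
  have "t \<le> length (filter (\<lambda>(a, b). a < b) M)
        \<or> t \<le> length (filter (\<lambda>(a, b). a < b) (map prod.swap M))"
    using t bad_pairs_eq_forward_plus_backward[of M] by linarith
  then show ?thesis
    using forward_matching_from_monotone_self_matching M monotone_self_matching_swap by blast
qed

lemma card_not_self_matching_le:
  assumes t: "2 * real t < \<epsilon> * real n + 2"
  shows "card {S \<in> strings_over k n. \<not> self_matching_property \<epsilon> S}
           \<le> (n choose t)\<^sup>2 * k ^ (n - t)"
proof -
  define G where "G P = {S \<in> strings_over k n. \<forall>(a, b) \<in> set P. S ! a = S ! b}" for P
  have "{S \<in> strings_over k n. \<not> self_matching_property \<epsilon> S}
          \<subseteq> (\<Union>P \<in> forward_matchings n t. G P)"
  proof clarify
    fix S assume S: "S \<in> strings_over k n" "\<not> self_matching_property \<epsilon> S"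
    then obtain M where M: "monotone_self_matching S M" "\<epsilon> * real n \<le> real (bad_pairs M)"
      by (auto simp: self_matching_property_def strings_over_def not_less)
    then have "real (2 * t) < real (bad_pairs M + 2)" using t by simp
    then have "2 * t \<le> bad_pairs M + 1" by linarith
    then show "S \<in> (\<Union>P \<in> forward_matchings n t. G P)"
      using forward_matching_from_bad_pairs[OF M(1)] S by (auto simp: G_def strings_over_def)
  qed
  then have "card {S \<in> strings_over k n. \<not> self_matching_property \<epsilon> S}
               \<le> card (\<Union>P \<in> forward_matchings n t. G P)"
    by (rule card_mono[rotated])
       (simp add: finite_forward_matchings G_def finite_strings_over)
  also have "\<dots> \<le> (\<Sum>P \<in> forward_matchings n t. card (G P))"
    by (rule card_UN_le[OF finite_forward_matchings])
  also have "\<dots> \<le> card (forward_matchings n t) * k ^ (n - t)"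
    using sum_bounded_above[of "forward_matchings n t" "\<lambda>P. card (G P)"]
      card_strings_with_forward_matching_le by (simp add: G_def)
  also have "\<dots> \<le> (n choose t)\<^sup>2 * k ^ (n - t)"
    by (simp add: card_forward_matchings_le)
  finally show ?thesis .
qed

lemma power_div_fact_le_exp:
  fixes x :: real
  assumes "0 \<le> x"
  shows "x ^ n / fact n \<le> exp x"
proof -
  have "(\<Sum>m\<in>{n}. inverse (fact m) * x ^ m) \<le> (\<Sum>m. inverse (fact m) * x ^ m)"
    by (rule sum_le_suminf[OF summable_exp]) (use assms in auto)
  then show ?thesis by (simp add: exp_def field_simps)
qed

lemma binomial_le_exp_pow:
  assumes "0 < t"
  shows "real (n choose t) \<le> (exp 1 * real n / real t) ^ t"
proof -
  have choose: "real (n choose t) * fact t \<le> real n ^ t"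
    using binomial_fact_pow[of n t] by (metis of_nat_fact of_nat_le_iff of_nat_mult of_nat_power)
  have "real (n choose t) * real t ^ t \<le> real (n choose t) * (exp 1 ^ t * fact t)"
    using power_div_fact_le_exp[of "real t" t] exp_of_nat_mult[of t "1 :: real"]
    by (intro mult_left_mono) (simp_all add: field_simps)
  also have "\<dots> = (real (n choose t) * fact t) * exp 1 ^ t" by simp
  also have "\<dots> \<le> real n ^ t * exp 1 ^ t"
    using choose by (rule mult_right_mono) simp
  finally have "real (n choose t) * real t ^ t \<le> (exp 1 * real n) ^ t"
    by (simp add: power_mult_distrib mult.commute)
  moreover have "0 < real t ^ t" using assms by simp
  ultimately show ?thesis
    by (simp add: power_divide pos_le_divide_eq)
qed

lemma twice_binomial_square_le:
  fixes \<epsilon> :: real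
  assumes "0 < \<epsilon>" "0 < t" "\<epsilon> * real n \<le> 2 * real t" "72 / \<epsilon>\<^sup>2 \<le> real k"
  shows "2 * real ((n choose t)\<^sup>2) \<le> real k ^ t"
proof -
  have "exp 1 * real n \<le> 3 * real n" using exp_le by (simp add: mult_right_mono)
  also have "\<dots> \<le> 6 / \<epsilon> * real t" using assms by (simp add: field_simps)
  finally have "exp 1 * real n / real t \<le> 6 / \<epsilon>"
    using assms(2) by (simp add: divide_le_eq)
  then have "(exp 1 * real n / real t) ^ t \<le> (6 / \<epsilon>) ^ t"
    by (rule power_mono) simp
  then have "real (n choose t) \<le> (6 / \<epsilon>) ^ t"
    using binomial_le_exp_pow[OF assms(2), of n] by linarith
  then have "2 * real ((n choose t)\<^sup>2) \<le> 2 * ((6 / \<epsilon>) ^ t)\<^sup>2"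
    by (simp add: power_mono)
  also have "\<dots> = 2 * ((6 / \<epsilon>)\<^sup>2) ^ t"
    by (simp add: power_mult[symmetric] mult.commute)
  also have "\<dots> = 2 * (36 / \<epsilon>\<^sup>2) ^ t"
    by (simp add: power_divide)
  also have "\<dots> \<le> 2 ^ t * (36 / \<epsilon>\<^sup>2) ^ t"
    using assms(2) by (intro mult_right_mono) (auto simp: self_le_power)
  also have "\<dots> = (72 / \<epsilon>\<^sup>2) ^ t" by (simp add: power_mult_distrib[symmetric])
  also have "\<dots> \<le> real k ^ t" using assms by (simp add: power_mono)
  finally show ?thesis .
qed

lemma half_le_card_filter_ratio:
  assumes "finite A" "A \<noteq> {}" "2 * card {x \<in> A. \<not> P x} \<le> card A"
  shows "1 / 2 \<le> real (card {x \<in> A. P x}) / real (card A)"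
proof -
  have "card {x \<in> A. P x} + card {x \<in> A. \<not> P x} = card A"
    using assms(1) by (subst card_Un_disjoint[symmetric]) (auto intro: arg_cong[where f = card])
  then show ?thesis using assms by (simp add: field_simps card_gt_0_iff)
qed

lemma self_matching_fraction_ge_half:
  fixes \<epsilon> :: real
  assumes \<epsilon>: "0 < \<epsilon>" "\<epsilon> < 1" and n: "0 < n" and k: "72 / \<epsilon>\<^sup>2 \<le> real k"
  shows "1 / 2 \<le> real (card {S \<in> strings_over k n. self_matching_property \<epsilon> S})
                    / real (card (strings_over k n))"
proof -
  define t where "t = nat \<lceil>\<epsilon> * real n / 2\<rceil>"
  have "0 < \<epsilon> * real n" "\<epsilon> * real n \<le> real n"
    using \<epsilon> n by (auto simp: mult_left_le_one_le)
  then have t: "0 < t" "t \<le> n" "\<epsilon> * real n \<le> 2 * real t" "2 * real t < \<epsilon> * real n + 2"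
    unfolding t_def by linarith+
  have "0 < 72 / \<epsilon>\<^sup>2" using \<epsilon> by simp
  then have "0 < k" using k by linarith
  have "2 * (n choose t)\<^sup>2 \<le> k ^ t"
    using twice_binomial_square_le[OF \<epsilon>(1) t(1) t(3) k] by (simp flip: of_nat_power)
  have "2 * card {S \<in> strings_over k n. \<not> self_matching_property \<epsilon> S}
          \<le> 2 * (n choose t)\<^sup>2 * k ^ (n - t)"
    using card_not_self_matching_le[OF t(4), of k] by simp
  also have "\<dots> \<le> k ^ t * k ^ (n - t)"
    using \<open>2 * (n choose t)\<^sup>2 \<le> k ^ t\<close> by (rule mult_le_mono1)
  also have "\<dots> = card (strings_over k n)"
    using t(2) by (simp add: card_strings_over flip: power_add)
  finally show ?thesis
    using \<open>0 < k\<close> by (intro half_le_card_filter_ratio finite_strings_over)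
       (auto simp: card_strings_over dest: arg_cong[where f = card])
qed

theorem theorem35:
  shows "\<exists>C > 0. \<exists>p > 0. \<forall>\<epsilon> n. 0 < \<epsilon> \<and> \<epsilon> < 1 \<and> n \<ge> 1 \<longrightarrow>
     (let k = nat \<lceil>C / \<epsilon> ^ 3\<rceil> in
        real (card {S \<in> strings_over k n. self_matching_property \<epsilon> S})
          / real (card (strings_over k n)) \<ge> p)"
proof (rule exI[of _ 72], intro conjI exI[of _ "1 / 2"] allI impI)
  fix \<epsilon> :: real and n :: nat
  assume \<epsilon>: "0 < \<epsilon> \<and> \<epsilon> < 1 \<and> n \<ge> 1"
  have "72 / \<epsilon>\<^sup>2 \<le> 72 / \<epsilon> ^ 3"
    using \<epsilon> by (simp add: frac_le power_decreasing)
  also have "\<dots> \<le> real (nat \<lceil>72 / \<epsilon> ^ 3\<rceil>)" by linarith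
  finally show "let k = nat \<lceil>72 / \<epsilon> ^ 3\<rceil> in
      1 / 2 \<le> real (card {S \<in> strings_over k n. self_matching_property \<epsilon> S})
                / real (card (strings_over k n))"
    using \<epsilon> self_matching_fraction_ge_half by (simp add: Let_def)
qed simp_all

end
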